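(* Let $u>1$ be an integer, let $r=u+1$, and let $s\ge 2u+2$ be an integer. Let $x$ be a non-negative integer whose $r$-canonical representation is $[x]^r=\binom{n}{r}+\binom{m}{r-1}+\binom{2u-1}{r-2}$. Then for every integer $y$ with $\binom{n}{r}+\binom{m}{r-1}\le y\le x$, $$k_s(k_r\le y)=\binom{n}{s}+\binom{m}{s-1}.$$
   Context: All graphs are finite simple graphs. For a graph $g$ and an integer $r>1$, $k_r(g)$ denotes the number of subgraphs of $g$ isomorphic to the complete graph $K_r$. For $r<s$ and a non-negative integer $x$, $k_s(k_r\le x)$ denotes the maximum of $k_s(g)$ over all graphs $g$ with $k_r(g)\le x$. The $r$-canonical representation $[x]^r$ of a non-negative integer $x$ is obtained greedily: choose $a_r$ as large as possible with $\binom{a_r}{r}\le x$, then $a_{r-1}$ as large as possible with $\binom{a_{r-1}}{r-1}\le x-\binom{a_r}{r}$, and so on, until $x=\binom{a_r}{r}+\binom{a_{r-1}}{r-1}+\dots+\binom{a_{r-j}}{r-j}$; one has $a_r>a_{r-1}>\dots>a_{r-j}$. A binomial coefficient whose top entry is less than its bottom entry is taken to be $0$. *)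

theory Defs
  imports Main
begin

text \<open>Finite simple graphs, with vertices taken from nat (every finite simple graph
  is isomorphic to one of these): a finite vertex set V and a set E of 2-element subsets of V.\<close>
definition simple_graph :: "nat set \<Rightarrow> nat set set \<Rightarrow> bool" where
  "simple_graph V E \<longleftrightarrow> finite V \<and> (\<forall>e\<in>E. e \<subseteq> V \<and> card e = 2)"

definition kcount :: "nat \<Rightarrow> nat set \<Rightarrow> nat set set \<Rightarrow> nat" where
  "kcount r V E = card {S. S \<subseteq> V \<and> card S = r \<and> (\<forall>a\<in>S. \<forall>b\<in>S. a \<noteq> b \<longrightarrow> {a, b} \<in> E)}"

definition kmax :: "nat \<Rightarrow> nat \<Rightarrow> nat \<Rightarrow> nat" where
  "kmax s r x = Sup {kcount s V E | V E. simple_graph V E \<and> kcount r V E \<le> x}"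

fun canon :: "nat \<Rightarrow> nat \<Rightarrow> nat list" where
  "canon 0 x = []"
| "canon (Suc k) x =
     (if x = 0 then []
      else let a = (GREATEST a. a choose (Suc k) \<le> x)
           in a # canon k (x - (a choose (Suc k))))"

end

theory Submission
  imports Defs
begin

(* The lower bound is attained by K_n together with one further vertex joined to m of its
   vertices. For the upper bound, a graph with more than C(n,s) + C(m,s-1) copies of K_s has at
   least as many as the value of a suitable s-cascade ([n, m, s-2], [n, s-1] or [s]). Since the
   (t-1)-cliques contain the shadow of the t-cliques, the Kruskal-Katona theorem in cascade form
   (proved by shifting towards a pivot and induction via the link of the pivot) carries this down
   to level r = u+1. There the same cascade has value larger than x, because greediness of the
   canonical representation gives x - C(n,r) - C(m,r-1) < C(2u, u-1) <= C(s-2, u-1). *)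

section \<open>Shadows and shifting\<close>

definition shadow :: "'a set set \<Rightarrow> 'a set set" where
  "shadow F = {G - {x} | G x. G \<in> F \<and> x \<in> G}"

definition uniform_family :: "nat \<Rightarrow> 'a set set \<Rightarrow> bool" where
  "uniform_family k F \<longleftrightarrow> finite F \<and> (\<forall>G\<in>F. finite G \<and> card G = k)"

lemma shadowI: "G \<in> F \<Longrightarrow> x \<in> G \<Longrightarrow> G - {x} \<in> shadow F"
  unfolding shadow_def by blast

lemma finite_shadow:
  assumes "uniform_family k F"
  shows "finite (shadow F)"
proof -
  have "shadow F = (\<Union>G\<in>F. (\<lambda>x. G - {x}) ` G)"
    unfolding shadow_def by blast
  then show ?thesis
    using assms unfolding uniform_family_def by auto
qed

definition shift :: "'a \<Rightarrow> 'a \<Rightarrow> 'a set \<Rightarrow> 'a set" where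
  "shift p j G = (if j \<in> G \<and> p \<notin> G then insert p (G - {j}) else G)"

definition shift_family :: "'a \<Rightarrow> 'a \<Rightarrow> 'a set set \<Rightarrow> 'a set set" where
  "shift_family p j F =
     {G \<in> F. shift p j G \<in> F} \<union> {shift p j G | G. G \<in> F \<and> shift p j G \<notin> F}"

definition shifted :: "'a \<Rightarrow> 'a set set \<Rightarrow> bool" where
  "shifted p F \<longleftrightarrow> (\<forall>G\<in>F. p \<notin> G \<longrightarrow> (\<forall>j\<in>G. insert p (G - {j}) \<in> F))"

lemma shift_family_eq:
  "shift_family p j F = (F - {G\<in>F. shift p j G \<notin> F}) \<union> shift p j ` {G\<in>F. shift p j G \<notin> F}"
  unfolding shift_family_def by blast

lemma shift_moved:
  assumes "shift p j G \<noteq> G"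
  shows "j \<in> G" "p \<notin> G" "shift p j G = insert p (G - {j})"
  using assms by (simp_all add: shift_def split: if_splits)

lemma shift_familyI1: "G \<in> F \<Longrightarrow> shift p j G \<in> F \<Longrightarrow> G \<in> shift_family p j F"
  unfolding shift_family_def by blast

lemma shift_familyI2: "G \<in> F \<Longrightarrow> shift p j G \<notin> F \<Longrightarrow> shift p j G \<in> shift_family p j F"
  unfolding shift_family_def by blast

lemma shift_family_avoiding_pivot:
  assumes "H \<in> shift_family p j F" "p \<notin> H"
  shows "H \<in> F \<and> shift p j H \<in> F"
proof (rule ccontr)
  assume "\<not> (H \<in> F \<and> shift p j H \<in> F)"
  then obtain G where "G \<in> F" "shift p j G \<notin> F" and H: "H = shift p j G"
    using assms(1) unfolding shift_family_def by blast
  then have "shift p j G \<noteq> G" by auto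
  from shift_moved(3)[OF this] have "p \<in> H" using H by simp
  with assms(2) show False by contradiction
qed

lemma inj_on_shift:
  "inj_on (shift p j) {G. shift p j G \<noteq> G}"
proof (rule inj_onI)
  fix G H assume "G \<in> {G. shift p j G \<noteq> G}" "H \<in> {G. shift p j G \<noteq> G}"
    and eq: "shift p j G = shift p j H"
  then have "shift p j G \<noteq> G" "shift p j H \<noteq> H" by simp_all
  note G = shift_moved[OF this(1)] and H = shift_moved[OF this(2)]
  have "G - {j} = insert p (G - {j}) - {p}" using G by auto
  also have "\<dots> = insert p (H - {j}) - {p}" using G H eq by simp
  also have "\<dots> = H - {j}" using H by auto
  finally show "G = H"
    using G(1) H(1) by (metis insert_Diff)
qed

lemma card_shift_family:
  assumes "finite F"
  shows "card (shift_family p j F) = card F"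
proof -
  let ?M = "{G\<in>F. shift p j G \<notin> F}"
  have "inj_on (shift p j) ?M"
    by (rule inj_on_subset[OF inj_on_shift]) auto
  moreover have "(F - ?M) \<inter> shift p j ` ?M = {}" by auto
  moreover have "finite ?M" using assms by simp
  ultimately have "card (shift_family p j F) = card (F - ?M) + card ?M"
    unfolding shift_family_eq using assms by (subst card_Un_disjoint) (simp_all add: card_image)
  also have "\<dots> = card F"
    using assms card_Diff_subset[of ?M F] card_mono[of F ?M] by simp
  finally show ?thesis .
qed

lemma card_shift:
  assumes "finite G"
  shows "finite (shift p j G) \<and> card (shift p j G) = card G"
proof (cases "shift p j G = G")
  case False
  note shift_moved[OF False]
  moreover have "card (insert p (G - {j})) = Suc (card (G - {j}))"
    using assms \<open>p \<notin> G\<close> by simp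
  moreover have "Suc (card (G - {j})) = card G"
    using assms \<open>j \<in> G\<close> by (rule card_Suc_Diff1)
  ultimately show ?thesis
    using assms by simp
qed (use assms in simp)

lemma uniform_shift_family:
  assumes "uniform_family k F"
  shows "uniform_family k (shift_family p j F)"
  unfolding uniform_family_def
proof
  have "shift_family p j F \<subseteq> F \<union> shift p j ` F"
    unfolding shift_family_def by blast
  moreover have "finite (F \<union> shift p j ` F)"
    using assms unfolding uniform_family_def by simp
  ultimately show "finite (shift_family p j F)"
    by (rule finite_subset)
next
  show "\<forall>H\<in>shift_family p j F. finite H \<and> card H = k"
  proof
    fix H assume "H \<in> shift_family p j F"
    then obtain G where "G \<in> F" and H: "H = G \<or> H = shift p j G"
      unfolding shift_family_def by blast
    then have "finite G" "card G = k"
      using assms unfolding uniform_family_def by auto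
    then show "finite H \<and> card H = k"
      using H card_shift by metis
  qed
qed

lemma shift_Diff_in_shadow:
  assumes "j \<noteq> p" "A \<in> F" "shift p j A \<in> F" "x \<in> A"
  shows "shift p j (A - {x}) \<in> shadow F"
proof (cases "shift p j (A - {x}) = A - {x}")
  case True
  then show ?thesis using shadowI[OF assms(2,4)] by simp
next
  case False
  note moved = shift_moved[OF False]
  show ?thesis
  proof (cases "p \<in> A")
    case False
    have "p \<in> shift p j A" using moved(1) False by (simp add: shift_def)
    then have "shift p j A \<noteq> A" using False by blast
    note A_moved = shift_moved[OF this]
    have "x \<noteq> j" "x \<noteq> p" using moved(1) assms(4) False by auto
    then have "shift p j (A - {x}) = shift p j A - {x}" using moved(3) A_moved(3) by auto
    moreover have "x \<in> shift p j A" using A_moved(3) assms(4) \<open>x \<noteq> j\<close> by simp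
    ultimately show ?thesis using shadowI[OF assms(3)] by simp
  next
    case True
    then have "x = p" using moved(2) by auto
    then have "shift p j (A - {x}) = insert p (A - {p} - {j})" using moved(3) by simp
    also have "\<dots> = A - {j}" using True assms(1) by blast
    finally show ?thesis using shadowI[OF assms(2)] moved(1) by simp
  qed
qed

lemma shift_Diff_in_shift_family_shadow:
  assumes "B \<in> F" "shift p j B \<notin> F" "x \<in> shift p j B"
  shows "shift p j B - {x} \<in> shift_family p j (shadow F)"
proof -
  have "shift p j B \<noteq> B" using assms(1,2) by auto
  note moved = shift_moved[OF this]
  show ?thesis
  proof (cases "x = p")
    case True
    then have "shift p j B - {x} = B - {j}" using moved(2,3) by auto
    moreover have "B - {j} \<in> shadow F" using shadowI[OF assms(1) moved(1)] .
    moreover have "shift p j (B - {j}) = B - {j}" by (simp add: shift_def)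
    ultimately show ?thesis using shift_familyI1 by metis
  next
    case False
    have x: "x \<in> B" "x \<noteq> j" using False assms(3) moved(3) by auto
    have "shift p j (B - {x}) = insert p (B - {x} - {j})"
      using x moved(1,2) by (simp add: shift_def)
    also have "\<dots> = shift p j B - {x}" using moved(3) False by auto
    finally have shifted_eq: "shift p j (B - {x}) = shift p j B - {x}" .
    show ?thesis
    proof (cases "shift p j B - {x} \<in> shadow F")
      case True
      have "p \<in> shift p j B - {x}" using moved(3) False by simp
      then have "shift p j (shift p j B - {x}) = shift p j B - {x}" by (simp add: shift_def)
      then show ?thesis using True by (simp add: shift_familyI1)
    next
      case False
      then show ?thesis
        using shift_familyI2[of "B - {x}" "shadow F" p j, OF shadowI[OF assms(1) x(1)]] shifted_eq
        by simp
    qed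
  qed
qed

lemma shadow_shift_family:
  assumes "j \<noteq> p"
  shows "shadow (shift_family p j F) \<subseteq> shift_family p j (shadow F)"
proof
  fix H assume "H \<in> shadow (shift_family p j F)"
  then obtain A x where A: "A \<in> shift_family p j F" "x \<in> A" and H: "H = A - {x}"
    unfolding shadow_def by blast
  show "H \<in> shift_family p j (shadow F)"
  proof (cases "A \<in> F \<and> shift p j A \<in> F")
    case True
    then have "H \<in> shadow F" "shift p j H \<in> shadow F"
      using shadowI[of A F x] shift_Diff_in_shadow[OF assms _ _ A(2)] A(2) H by simp_all
    then show ?thesis by (simp add: shift_familyI1)
  next
    case False
    then obtain B where B: "B \<in> F" "shift p j B \<notin> F" and AB: "A = shift p j B"
      using A(1) unfolding shift_family_def by blast
    then show ?thesis
      using shift_Diff_in_shift_family_shadow[OF B, of x] A(2) H by simp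
  qed
qed

lemma card_shadow_shift_family:
  assumes "uniform_family k F" "j \<noteq> p"
  shows "card (shadow (shift_family p j F)) \<le> card (shadow F)"
proof -
  have "finite (shift_family p j (shadow F))"
    using finite_shadow[OF assms(1)] unfolding shift_family_eq by simp
  then have "card (shadow (shift_family p j F)) \<le> card (shift_family p j (shadow F))"
    using shadow_shift_family[OF assms(2)] by (rule card_mono)
  also have "\<dots> = card (shadow F)"
    by (rule card_shift_family[OF finite_shadow[OF assms(1)]])
  finally show ?thesis .
qed

text \<open>Each compression strictly decreases the number of members avoiding the pivot, and
  neither changes the size of the family nor increases its shadow.\<close>
lemma exists_shifted_family:
  fixes p :: 'a and F :: "'a set set"
  assumes "uniform_family k F"
  obtains F' where "uniform_family k F'" "card F' = card F" "card (shadow F') \<le> card (shadow F)"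
    "shifted p F'"
  using assms
proof (induction "card {G\<in>F. p \<notin> G}" arbitrary: F thesis rule: less_induct)
  case less
  show ?case
  proof (cases "shifted p F")
    case True then show ?thesis using less.prems by blast
  next
    case False
    then obtain G j where G: "G \<in> F" "p \<notin> G" "j \<in> G" "insert p (G - {j}) \<notin> F"
      unfolding shifted_def by blast
    have "j \<noteq> p" using G by blast
    have fin: "finite F" using less.prems(2) unfolding uniform_family_def by simp
    have "shift p j G \<notin> F" using G by (simp add: shift_def)
    then have "G \<notin> shift_family p j F"
      using shift_family_avoiding_pivot[of G p j F] G(2) by auto
    moreover have "{H\<in>shift_family p j F. p \<notin> H} \<subseteq> {H\<in>F. p \<notin> H}"
      using shift_family_avoiding_pivot by fast
    ultimately have "{H\<in>shift_family p j F. p \<notin> H} \<subset> {H\<in>F. p \<notin> H}"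
      using G(1,2) by auto
    then have "card {H\<in>shift_family p j F. p \<notin> H} < card {H\<in>F. p \<notin> H}"
      using fin by (simp add: psubset_card_mono)
    from less.hyps[OF this _ uniform_shift_family[OF less.prems(2)]] obtain F' where
      "uniform_family k F'" "card F' = card (shift_family p j F)"
      "card (shadow F') \<le> card (shadow (shift_family p j F))" "shifted p F'"
      by blast
    moreover note card_shift_family[OF fin]
      card_shadow_shift_family[OF less.prems(2) \<open>j \<noteq> p\<close>]
    ultimately show ?thesis
      using less.prems(1) by simp
  qed
qed

definition link :: "'a \<Rightarrow> 'a set set \<Rightarrow> 'a set set" where
  "link p F = (\<lambda>G. G - {p}) ` {G \<in> F. p \<in> G}"

lemma card_link_add_card_avoiding:
  assumes "finite F"
  shows "card F = card (link p F) + card {G \<in> F. p \<notin> G}"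
proof -
  have "inj_on (\<lambda>G. G - {p}) {G \<in> F. p \<in> G}"
    by (rule inj_onI) (metis CollectD insert_Diff)
  then have "card (link p F) = card {G \<in> F. p \<in> G}"
    unfolding link_def by (rule card_image)
  moreover have "F = {G \<in> F. p \<in> G} \<union> {G \<in> F. p \<notin> G}" by blast
  ultimately show ?thesis
    using assms by (metis (no_types, lifting) card_Un_disjoint disjoint_iff finite_Un mem_Collect_eq)
qed

lemma uniform_link:
  assumes "uniform_family (Suc k) F"
  shows "uniform_family k (link p F)"
  using assms unfolding uniform_family_def link_def by auto

lemma uniform_avoiding:
  "uniform_family k F \<Longrightarrow> uniform_family k {G \<in> F. p \<notin> G}"
  unfolding uniform_family_def by auto

lemma shadow_avoiding_subset_link:
  assumes "shifted p F"
  shows "shadow {G \<in> F. p \<notin> G} \<subseteq> link p F"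
proof
  fix H assume "H \<in> shadow {G \<in> F. p \<notin> G}"
  then obtain G x where G: "G \<in> F" "p \<notin> G" "x \<in> G" and H: "H = G - {x}"
    unfolding shadow_def by blast
  then have "insert p (G - {x}) \<in> F"
    using assms unfolding shifted_def by blast
  moreover have "H = insert p (G - {x}) - {p}"
    using G(2) H by auto
  ultimately show "H \<in> link p F"
    unfolding link_def by blast
qed

text \<open>Members of the shadow containing \<open>p\<close> come from the shadow of the link, those avoiding
  \<open>p\<close> include the link itself.\<close>
lemma card_link_add_card_shadow_link_le:
  assumes "uniform_family k F"
  shows "card (link p F) + card (shadow (link p F)) \<le> card (shadow F)"
proof -
  have sub: "link p F \<union> insert p ` shadow (link p F) \<subseteq> shadow F"
    unfolding link_def shadow_def by blast
  have fin: "finite (shadow F)"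
    using finite_shadow[OF assms] .
  have avoid: "p \<notin> H" if "H \<in> link p F \<or> H \<in> shadow (link p F)" for H
    using that unfolding link_def shadow_def by blast
  have "inj_on (insert p) (shadow (link p F))"
    by (rule inj_onI) (metis avoid Diff_insert_absorb)
  then have "card (link p F \<union> insert p ` shadow (link p F))
      = card (link p F) + card (shadow (link p F))"
    using finite_subset[OF sub fin] avoid
    by (subst card_Un_disjoint) (auto simp: card_image)
  then show ?thesis
    using card_mono[OF fin sub] by simp
qed

lemma link_nonempty:
  assumes "shifted p F" "uniform_family (Suc k) F" "F \<noteq> {}"
  shows "link p F \<noteq> {}"
proof -
  obtain G where G: "G \<in> F" using assms(3) by blast
  show ?thesis
  proof (cases "p \<in> G")
    case True then show ?thesis using G unfolding link_def by blast
  next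
    case False
    have "G \<noteq> {}" using G assms(2) unfolding uniform_family_def by auto
    then obtain j where "j \<in> G" by blast
    then have "insert p (G - {j}) \<in> F"
      using assms(1) G False unfolding shifted_def by blast
    then show ?thesis unfolding link_def by blast
  qed
qed

section \<open>The Kruskal-Katona theorem for cascades\<close>

text \<open>Canonical representations are cascades,
  but cascades need not be greedy.\<close>
fun cascade :: "nat \<Rightarrow> nat list \<Rightarrow> bool" where
  "cascade k [] = True"
| "cascade k (a # L) \<longleftrightarrow>
     k \<le> a \<and> (\<forall>b\<in>set L. b < a) \<and> (if k = 0 then L = [] else cascade (k - 1) L)"

fun cascade_sum :: "nat \<Rightarrow> nat list \<Rightarrow> nat" where
  "cascade_sum k [] = 0"
| "cascade_sum k (a # L) = (a choose k) + (if k = 0 then 0 else cascade_sum (k - 1) L)"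

abbreviation decr :: "nat list \<Rightarrow> nat list" where
  "decr L \<equiv> map (\<lambda>a. a - 1) L"

lemma cascade_sum_0: "cascade_sum 0 L = (if L = [] then 0 else 1)"
  by (cases L) auto

lemma cascade_sum_pos: "cascade k (a # L) \<Longrightarrow> 0 < cascade_sum k (a # L)"
  by (simp add: zero_less_binomial)

lemma cascade_sum_take: "j < i \<Longrightarrow> cascade_sum j (take i L) = cascade_sum j L"
proof (induction L arbitrary: i j)
  case (Cons a L)
  then obtain i' where "i = Suc i'" by (cases i) auto
  with Cons show ?case by (cases j) auto
qed simp

lemma cascade_take_pos: "cascade k L \<Longrightarrow> y \<in> set (take k L) \<Longrightarrow> 0 < y"
proof (induction L arbitrary: k)
  case (Cons a L)
  then show ?case by (cases k) auto
qed simp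

lemma cascade_decr_take:
  "cascade (Suc k) L \<Longrightarrow> cascade k (decr (take (Suc k) L))"
proof (induction L arbitrary: k)
  case (Cons a L)
  have a: "Suc k \<le> a" "\<forall>b\<in>set L. b < a" and L: "cascade k L"
    using Cons.prems by auto
  have "b - 1 < a - 1" if "b \<in> set (take k L)" for b
  proof -
    have "b < a" "0 < b"
      using that a(2) cascade_take_pos[OF L] in_set_takeD by fastforce+
    then show ?thesis by simp
  qed
  then show ?case
    using Cons.IH L a by (cases k) auto
qed simp

lemma cascade_sum_pascal:
  assumes "\<forall>y\<in>set (take (Suc k) L). 0 < y"
  shows "cascade_sum (Suc k) L = cascade_sum k (decr L) + cascade_sum (Suc k) (decr L)"
  using assms
proof (induction L arbitrary: k)
  case (Cons a L)
  then obtain a' where a: "a = Suc a'" by (cases a) auto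
  show ?case
  proof (cases k)
    case 0
    then show ?thesis using a by (simp add: cascade_sum_0)
  next
    case (Suc k')
    then have "cascade_sum (Suc k') L = cascade_sum k' (decr L) + cascade_sum (Suc k') (decr L)"
      using Cons by simp
    then show ?thesis using a Suc by simp
  qed
qed simp

text \<open>A cascade whose leading entry is as small as allowed is \<open>[k+1, k, k-1, ...]\<close>
  truncated, whence the bound.\<close>
lemma cascade_sum_decr_tight:
  "cascade (Suc k) (Suc k # R) \<Longrightarrow> cascade_sum k (decr (Suc k # R)) \<le> Suc k"
proof (induction R arbitrary: k)
  case (Cons b R)
  show ?case
  proof (cases k)
    case (Suc k')
    then have "b = Suc k'" "cascade (Suc k') (Suc k' # R)"
      using Cons.prems by auto
    then show ?thesis
      using Cons.IH[of k'] Suc by simp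
  qed simp
qed simp

text \<open>Lowering every entry of a cascade loses its tight tail; adding one restores a cascade
  whose value one level down is at least the lowered one. The bound on the entries only serves
  the induction.\<close>
lemma exists_cascade_above_decr:
  "cascade (Suc k) L \<Longrightarrow> \<exists>L'. cascade (Suc k) L'
     \<and> cascade_sum (Suc k) L' \<le> Suc (cascade_sum (Suc k) (decr L))
     \<and> cascade_sum k (decr L) \<le> cascade_sum k L'
     \<and> (\<forall>y\<in>set L'. y \<le> max (hd L - 1) (Suc k))"
proof (induction L arbitrary: k)
  case Nil
  show ?case by (intro exI[of _ "[]"]) simp
next
  case (Cons a R)
  then have "Suc k \<le> a" by simp
  consider "a = Suc k" | "Suc k < a" "k = 0 \<or> R = []"
    | k' where "Suc k < a" "k = Suc k'" "R \<noteq> []"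
    using \<open>Suc k \<le> a\<close> by (cases k) fastforce+
  then show ?case
  proof cases
    case 1
    then have "cascade_sum k (decr (a # R)) \<le> Suc k"
      using cascade_sum_decr_tight Cons.prems by blast
    then show ?thesis
      using 1 by (intro exI[of _ "[Suc k]"]) (simp add: binomial_Suc_n)
  next
    case 2
    then show ?thesis
      by (intro exI[of _ "[a - 1]"]) (auto simp: cascade_sum_0)
  next
    case 3
    have R: "cascade (Suc k') R" "\<forall>b\<in>set R. b < a"
      using Cons.prems 3 by auto
    obtain R' where R': "cascade (Suc k') R'"
      "cascade_sum (Suc k') R' \<le> Suc (cascade_sum (Suc k') (decr R))"
      "cascade_sum k' (decr R) \<le> cascade_sum k' R'"
      "\<forall>y\<in>set R'. y \<le> max (hd R - 1) (Suc k')"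
      using Cons.IH[OF R(1)] by blast
    have "hd R < a" using R(2) \<open>R \<noteq> []\<close> by simp
    then have "\<forall>y\<in>set R'. y < a - 1"
      using R'(4) 3 by fastforce
    then show ?thesis
      using R' 3 by (intro exI[of _ "(a - 1) # R'"]) auto
  qed
qed

text \<open>The core of the induction step of Kruskal-Katona: if the link were too small, the
  members avoiding the pivot would be too many, and their shadow, which lies in the link,
  too large.\<close>
lemma cascade_sum_decr_le_card_link:
  fixes F :: "'a set set"
  assumes smaller: "\<And>(G :: 'a set set) L'. card G < card F \<Longrightarrow> uniform_family (Suc k) G
      \<Longrightarrow> cascade (Suc k) L' \<Longrightarrow> cascade_sum (Suc k) L' \<le> card G
      \<Longrightarrow> cascade_sum k L' \<le> card (shadow G)"
    and F: "uniform_family (Suc k) F" "shifted p F"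
    and L: "cascade (Suc k) L" "cascade_sum (Suc k) L \<le> card F"
  shows "cascade_sum k (decr L) \<le> card (link p F)"
proof (rule ccontr)
  assume "\<not> ?thesis"
  then have small: "card (link p F) < cascade_sum k (decr L)" by simp
  let ?A = "{G \<in> F. p \<notin> G}"
  have fin: "finite F" using F(1) unfolding uniform_family_def by simp
  have fin_link: "finite (link p F)"
    using uniform_link[OF F(1)] unfolding uniform_family_def by simp
  have "link p F \<noteq> {}"
  proof
    assume "link p F = {}"
    then have "F = {}" using link_nonempty[OF F(2,1)] by metis
    then have "cascade_sum (Suc k) L = 0" using L(2) by simp
    then have "L = []"
      using cascade_sum_pos L(1) by (cases L) fastforce+
    then show False using small by simp
  qed
  then have "0 < card (link p F)"
    using fin_link by (simp add: card_gt_0_iff)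
  then have "card ?A < card F"
    using card_link_add_card_avoiding[OF fin, of p] by linarith
  have "cascade_sum (Suc k) L = cascade_sum k (decr L) + cascade_sum (Suc k) (decr L)"
    using cascade_sum_pascal cascade_take_pos[OF L(1)] by blast
  then have "cascade_sum (Suc k) (decr L) < card ?A"
    using L(2) small card_link_add_card_avoiding[OF fin, of p] by linarith
  moreover obtain L' where L': "cascade (Suc k) L'"
    "cascade_sum (Suc k) L' \<le> Suc (cascade_sum (Suc k) (decr L))"
    "cascade_sum k (decr L) \<le> cascade_sum k L'"
    using exists_cascade_above_decr[OF L(1)] by blast
  ultimately have "cascade_sum k L' \<le> card (shadow ?A)"
    using smaller[OF \<open>card ?A < card F\<close> uniform_avoiding[OF F(1), of p] L'(1)] by simp
  also have "\<dots> \<le> card (link p F)"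
    using fin_link shadow_avoiding_subset_link[OF F(2)] by (rule card_mono)
  finally show False using L'(3) small by simp
qed

theorem kruskal_katona:
  fixes F :: "'a set set"
  assumes "uniform_family (Suc k) F" "cascade (Suc k) L" "cascade_sum (Suc k) L \<le> card F"
  shows "cascade_sum k L \<le> card (shadow F)"
  using assms
proof (induction k arbitrary: F L)
  case 0
  show ?case
  proof (cases L)
    case (Cons a R)
    then have "F \<noteq> {}"
      using cascade_sum_pos[of 1 a R] "0.prems" by auto
    then obtain G where "G \<in> F" "card G = 1"
      using "0.prems"(1) unfolding uniform_family_def by auto
    then obtain x where "G = {x}" "x \<in> G"
      by (metis card_1_singletonE singletonI)
    then have "{} \<in> shadow F"
      using shadowI[OF \<open>G \<in> F\<close>] by fastforce
    then have "0 < card (shadow F)"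
      using finite_shadow[OF "0.prems"(1)] card_gt_0_iff by blast
    then show ?thesis using Cons by (simp add: cascade_sum_0)
  qed simp
next
  case (Suc k)
  from Suc.prems show ?case
  proof (induction "card F" arbitrary: F L rule: less_induct)
    case less
    fix p :: 'a
    obtain F' where F': "uniform_family (Suc (Suc k)) F'" "card F' = card F"
      "card (shadow F') \<le> card (shadow F)" "shifted p F'"
      using exists_shifted_family[OF less.prems(1)] by blast
    have link: "cascade_sum (Suc k) (decr L) \<le> card (link p F')"
      using less.hyps less.prems(3) F'(2)
      by (intro cascade_sum_decr_le_card_link[OF _ F'(1,4) less.prems(2)]) auto
    have shadow_link: "cascade_sum k (decr L) \<le> card (shadow (link p F'))"
      using Suc.IH[OF uniform_link[OF F'(1)] cascade_decr_take[OF less.prems(2)]] link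
      by (simp add: take_map[symmetric] cascade_sum_take)
    have "cascade_sum (Suc k) L = cascade_sum k (decr L) + cascade_sum (Suc k) (decr L)"
      using cascade_take_pos[OF less.prems(2)] set_take_subset_set_take[of "Suc k" "Suc (Suc k)" L]
      by (intro cascade_sum_pascal) auto
    then show ?case
      using card_link_add_card_shadow_link_le[OF F'(1), of p] F'(3) link shadow_link by linarith
  qed
qed

section \<open>Cliques and canonical representations\<close>

definition cliques :: "nat \<Rightarrow> 'a set \<Rightarrow> 'a set set \<Rightarrow> 'a set set" where
  "cliques t V E = {S. S \<subseteq> V \<and> card S = t \<and> (\<forall>a\<in>S. \<forall>b\<in>S. a \<noteq> b \<longrightarrow> {a, b} \<in> E)}"

lemma kcount_eq_card_cliques: "kcount t V E = card (cliques t V E)"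
  by (simp add: kcount_def cliques_def)

lemma uniform_cliques:
  assumes "finite V"
  shows "uniform_family t (cliques t V E)"
proof -
  have "cliques t V E \<subseteq> Pow V" unfolding cliques_def by blast
  then have "finite (cliques t V E)"
    using assms by (simp add: finite_subset)
  moreover have "finite S" if "S \<in> cliques t V E" for S
  proof (rule finite_subset[OF _ assms])
    show "S \<subseteq> V" using that unfolding cliques_def by simp
  qed
  moreover have "card S = t" if "S \<in> cliques t V E" for S
    using that unfolding cliques_def by simp
  ultimately show ?thesis
    unfolding uniform_family_def by blast
qed

lemma shadow_cliques_subset: "shadow (cliques (Suc t) V E) \<subseteq> cliques t V E"
proof
  fix H assume "H \<in> shadow (cliques (Suc t) V E)"
  then obtain S x where S: "S \<in> cliques (Suc t) V E" "x \<in> S" and H: "H = S - {x}"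
    unfolding shadow_def by blast
  moreover have "finite S" using S(1) unfolding cliques_def by (simp add: card_ge_0_finite)
  ultimately show "H \<in> cliques t V E"
    unfolding cliques_def by auto
qed

lemma cascade_sum_le_kcount_descend:
  assumes "finite V" "r \<le> s" "\<And>j. r < j \<Longrightarrow> j \<le> s \<Longrightarrow> cascade j L"
    and "cascade_sum s L \<le> kcount s V E"
  shows "cascade_sum r L \<le> kcount r V E"
  using assms(2)
proof (induction r rule: inc_induct)
  case base
  show ?case using assms(4) .
next
  case (step j)
  then have "cascade_sum j L \<le> card (shadow (cliques (Suc j) V E))"
    using kruskal_katona[OF uniform_cliques[OF assms(1)] assms(3)]
    by (simp add: kcount_eq_card_cliques)
  also have "\<dots> \<le> card (cliques j V E)"
    using uniform_cliques[OF assms(1)] shadow_cliques_subset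
    unfolding uniform_family_def by (blast intro: card_mono)
  finally show ?case by (simp add: kcount_eq_card_cliques)
qed

lemma diff_less_choose: "0 < k \<Longrightarrow> k \<le> a \<Longrightarrow> a - k < a choose k"
proof (induction a)
  case (Suc a)
  show ?case
  proof (cases "k \<le> a")
    case True
    then have "0 < a choose (k - 1)" by simp
    moreover have "Suc a choose k = (a choose (k - 1)) + (a choose k)"
      using Suc.prems by (cases k) auto
    moreover have "a - k < a choose k" using Suc True by simp
    ultimately show ?thesis using True by linarith
  next
    case False
    with Suc.prems show ?thesis by simp
  qed
qed simp

lemma Greatest_choose_bounds:
  assumes "0 < k"
  shows "(GREATEST a. a choose k \<le> x) choose k \<le> x"
    and "x < Suc (GREATEST a. a choose k \<le> x) choose k"
proof -
  have bound: "a \<le> x + k" if "a choose k \<le> x" for a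
    using that diff_less_choose[OF assms, of a] by (cases "k \<le> a") auto
  have "0 choose k \<le> x" using assms by (simp add: binomial_eq_0)
  then show "(GREATEST a. a choose k \<le> x) choose k \<le> x"
    using GreatestI_nat[of "\<lambda>a. a choose k \<le> x"] bound by blast
  show "x < Suc (GREATEST a. a choose k \<le> x) choose k"
  proof (rule ccontr)
    assume "\<not> ?thesis"
    then have "Suc (GREATEST a. a choose k \<le> x) \<le> (GREATEST a. a choose k \<le> x)"
      using Greatest_le_nat[of "\<lambda>a. a choose k \<le> x", OF _ bound] by (simp add: not_less)
    then show False by simp
  qed
qed

lemma canon_Cons:
  assumes "canon (Suc k) x = a # L"
  shows "a choose Suc k \<le> x" "x < Suc a choose Suc k" "canon k (x - (a choose Suc k)) = L"
proof -
  have "x \<noteq> 0" using assms by (cases x) auto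
  then have "canon (Suc k) x = (GREATEST a. a choose Suc k \<le> x)
      # canon k (x - ((GREATEST a. a choose Suc k \<le> x) choose Suc k))"
    by (simp add: Let_def)
  then have "a = (GREATEST a. a choose Suc k \<le> x)" "canon k (x - (a choose Suc k)) = L"
    using assms by auto
  then show "a choose Suc k \<le> x" "x < Suc a choose Suc k" "canon k (x - (a choose Suc k)) = L"
    using Greatest_choose_bounds[of "Suc k" x] by simp_all
qed

lemma canon_Cons_Cons_less:
  assumes "canon (Suc (Suc k)) x = a # b # L"
  shows "b < a"
proof (rule ccontr)
  assume "\<not> b < a"
  then have "a choose Suc k \<le> b choose Suc k" by (simp add: binomial_right_mono)
  moreover have "b choose Suc k \<le> x - (a choose Suc (Suc k))"
    using canon_Cons(3)[OF assms] canon_Cons(1) by metis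
  moreover note canon_Cons(1,2)[OF assms]
  ultimately show False by simp
qed

lemma canon_three_terms:
  assumes "canon r x = [a, b, c]" "2 < r"
  shows "b < a" "x < Suc a choose r"
    and "x < (a choose r) + (b choose (r - 1)) + (Suc c choose (r - 2))"
proof -
  define k where "k = r - 3"
  have r: "r = Suc (Suc (Suc k))" using assms(2) unfolding k_def by simp
  note a = canon_Cons[OF assms(1)[unfolded r]]
  note b = canon_Cons[OF a(3)]
  note c = canon_Cons[OF b(3)]
  show "b < a" using canon_Cons_Cons_less assms(1) r by blast
  show "x < Suc a choose r" using a(2) r by simp
  show "x < (a choose r) + (b choose (r - 1)) + (Suc c choose (r - 2))"
    using a(1) b(1) c(2) r by simp
qed

section \<open>The extremal graph and the upper bound\<close>

definition clique_plus_vertex :: "nat \<Rightarrow> nat \<Rightarrow> nat set set" where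
  "clique_plus_vertex n m = {{a, b} | a b. a < n \<and> b < n \<and> a \<noteq> b} \<union> {{a, n} | a. a < m}"

lemma simple_graph_clique_plus_vertex: "m \<le> n \<Longrightarrow> simple_graph {..n} (clique_plus_vertex n m)"
  unfolding simple_graph_def clique_plus_vertex_def by auto

lemma edge_clique_plus_vertex_iff:
  assumes "m < n" "a \<noteq> b"
  shows "{a, b} \<in> clique_plus_vertex n m \<longleftrightarrow>
    (a < n \<and> b < n) \<or> (a = n \<and> b < m) \<or> (b = n \<and> a < m)"
  using assms unfolding clique_plus_vertex_def by (auto simp: doubleton_eq_iff)

lemma cliques_clique_plus_vertex:
  assumes "m < n" "0 < t"
  shows "cliques t {..n} (clique_plus_vertex n m) =
    {S. S \<subseteq> {..<n} \<and> card S = t} \<union> insert n ` {S. S \<subseteq> {..<m} \<and> card S = t - 1}"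
    (is "?L = ?A \<union> ?B")
proof (intro equalityI subsetI)
  fix S assume "S \<in> ?L"
  then have S: "S \<subseteq> {..n}" "card S = t"
    and edges: "\<And>a b. a \<in> S \<Longrightarrow> b \<in> S \<Longrightarrow> a \<noteq> b \<Longrightarrow> {a, b} \<in> clique_plus_vertex n m"
    unfolding cliques_def by auto
  show "S \<in> ?A \<union> ?B"
  proof (cases "n \<in> S")
    case False
    then have "S \<subseteq> {..<n}" using S(1) by (auto simp: less_le)
    then show ?thesis using S(2) by blast
  next
    case True
    have "S - {n} \<subseteq> {..<m}"
      using edges[OF True] edge_clique_plus_vertex_iff[OF assms(1)] by fastforce
    moreover have "card (S - {n}) = t - 1"
      using S True finite_subset by fastforce
    moreover have "S = insert n (S - {n})" using True by blast
    ultimately show ?thesis by blast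
  qed
next
  fix S assume "S \<in> ?A \<union> ?B"
  then show "S \<in> ?L"
  proof
    assume "S \<in> ?A"
    then show ?thesis
      using edge_clique_plus_vertex_iff[OF assms(1)] unfolding cliques_def by auto
  next
    assume "S \<in> ?B"
    then obtain T where T: "T \<subseteq> {..<m}" "card T = t - 1" and S: "S = insert n T" by blast
    have "finite T" "n \<notin> T" using T(1) assms(1) finite_subset by auto
    then have "card S = t" using T(2) S assms(2) by simp
    moreover have "S \<subseteq> {..n}" using T(1) S assms(1) by auto
    moreover have "{a, b} \<in> clique_plus_vertex n m" if "a \<in> S" "b \<in> S" "a \<noteq> b" for a b
      using that T(1) S assms(1) edge_clique_plus_vertex_iff[OF assms(1) \<open>a \<noteq> b\<close>] by auto
    ultimately show ?thesis unfolding cliques_def by blast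
  qed
qed

lemma kcount_clique_plus_vertex:
  assumes "m < n" "0 < t"
  shows "kcount t {..n} (clique_plus_vertex n m) = (n choose t) + (m choose (t - 1))"
proof -
  let ?A = "{S. S \<subseteq> {..<n} \<and> card S = t}" and ?T = "{S. S \<subseteq> {..<m} \<and> card S = t - 1}"
  have fin: "finite ?A" "finite ?T" by (simp_all add: finite_subset[of _ "Pow _"])
  have "inj_on (insert n) ?T"
    using assms(1) by (intro inj_onI) (metis Diff_insert_absorb lessThan_iff less_not_sym
      mem_Collect_eq subsetD)
  moreover have "?A \<inter> insert n ` ?T = {}" by auto
  ultimately have "kcount t {..n} (clique_plus_vertex n m) = card ?A + card ?T"
    using cliques_clique_plus_vertex[OF assms] fin
    by (simp add: kcount_eq_card_cliques card_Un_disjoint card_image)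
  also have "\<dots> = (n choose t) + (m choose (t - 1))"
    by (simp add: n_subsets)
  finally show ?thesis .
qed

lemma kmax_eqI:
  assumes "simple_graph V E" "kcount r V E \<le> x" "kcount s V E = b"
    and "\<And>V E. simple_graph V E \<Longrightarrow> kcount r V E \<le> x \<Longrightarrow> kcount s V E \<le> b"
  shows "kmax s r x = b"
  unfolding kmax_def using assms by (intro cSup_eq_maximum) blast+

lemma exists_cascade_witness:
  assumes "1 < u" "2 * u + 2 \<le> s" "m < n"
    and "x < Suc n choose Suc u"
    and "x < (n choose Suc u) + (m choose u) + (2 * u choose (u - 1))"
  obtains L where "\<And>j. Suc u < j \<Longrightarrow> j \<le> s \<Longrightarrow> cascade j L"
    "cascade_sum s L = Suc ((n choose s) + (m choose (s - 1)))" "x < cascade_sum (Suc u) L"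
proof -
  define u' where "u' = u - 2"
  have u: "u = Suc (Suc u')" using assms(1) unfolding u'_def by simp
  have s: "3 \<le> s" using assms(1,2) by simp
  have mid: "2 * u choose (u - 1) \<le> (s - 2) choose (u - 1)"
    using assms(2) by (simp add: binomial_right_mono)
  consider "s - 1 \<le> m" | "m < s - 1" "s \<le> n" | "n < s" by linarith
  then show ?thesis
  proof cases
    case 1
    show ?thesis
    proof (rule that[of "[n, m, s - 2]"])
      fix j assume j: "Suc u < j" "j \<le> s"
      define j' where "j' = j - 3"
      have "j = Suc (Suc (Suc j'))" using j u unfolding j'_def by simp
      then show "cascade j [n, m, s - 2]"
        using 1 assms(3) j by auto
    next
      show "cascade_sum s [n, m, s - 2] = Suc ((n choose s) + (m choose (s - 1)))"
        using s by (simp add: numeral_2_eq_2)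
    next
      have "cascade_sum (Suc u) [n, m, s - 2]
          = (n choose Suc u) + (m choose u) + ((s - 2) choose (u - 1))"
        using u by simp
      then show "x < cascade_sum (Suc u) [n, m, s - 2]"
        using assms(5) mid by linarith
    qed
  next
    case 2
    have "s - 1 = Suc (s - 2)" "u = Suc (u - 1)" using s u by simp_all
    then have "(s - 1) choose u = ((s - 2) choose (u - 1)) + ((s - 2) choose u)"
      by (metis binomial_Suc_Suc)
    moreover have "m choose u \<le> (s - 2) choose u"
      using 2 by (simp add: binomial_right_mono)
    moreover have "cascade_sum (Suc u) [n, s - 1] = (n choose Suc u) + ((s - 1) choose u)"
      using u by simp
    ultimately have "x < cascade_sum (Suc u) [n, s - 1]"
      using assms(5) mid by linarith
    moreover have "cascade_sum s [n, s - 1] = Suc ((n choose s) + (m choose (s - 1)))"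
      using s 2 by (simp add: binomial_eq_0)
    moreover have "cascade j [n, s - 1]" if "Suc u < j" "j \<le> s" for j
    proof -
      define j' where "j' = j - 2"
      have "j = Suc (Suc j')" using that u unfolding j'_def by simp
      then show ?thesis using 2 that by auto
    qed
    ultimately show ?thesis using that by blast
  next
    case 3
    have "Suc n choose Suc u \<le> s choose Suc u"
      using 3 by (intro binomial_right_mono) simp
    then show ?thesis
      using 3 assms(3,4) s by (intro that[of "[s]"]) (auto simp: binomial_eq_0)
  qed
qed

lemma kcount_le_of_canonical_bounds:
  assumes "1 < u" "2 * u + 2 \<le> s" "m < n"
    and "x < Suc n choose Suc u"
    and "x < (n choose Suc u) + (m choose u) + (2 * u choose (u - 1))"
    and G: "simple_graph V E" "kcount (Suc u) V E \<le> x"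
  shows "kcount s V E \<le> (n choose s) + (m choose (s - 1))"
proof (rule ccontr)
  assume contra: "\<not> ?thesis"
  obtain L where L: "\<And>j. Suc u < j \<Longrightarrow> j \<le> s \<Longrightarrow> cascade j L"
    "cascade_sum s L = Suc ((n choose s) + (m choose (s - 1)))" "x < cascade_sum (Suc u) L"
    using exists_cascade_witness[OF assms(1-5)] by blast
  have "finite V" using G(1) unfolding simple_graph_def by simp
  moreover have "Suc u \<le> s" using assms(2) by simp
  moreover have "cascade_sum s L \<le> kcount s V E"
    using L(2) contra by simp
  ultimately have "cascade_sum (Suc u) L \<le> kcount (Suc u) V E"
    using L(1) cascade_sum_le_kcount_descend by metis
  then show False using L(3) G(2) by simp
qed

theorem corollary1:
  fixes u r s x n m :: nat
  assumes "u > 1"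
    and "r = u + 1"
    and "s \<ge> 2 * u + 2"
    and "canon r x = [n, m, 2 * u - 1]"
  shows "\<forall>y::nat. (n choose r) + (m choose (r - 1)) \<le> y \<and> y \<le> x \<longrightarrow>
           kmax s r y = (n choose s) + (m choose (s - 1))"
proof (intro allI impI)
  fix y assume y: "(n choose r) + (m choose (r - 1)) \<le> y \<and> y \<le> x"
  have bounds: "m < n" "x < Suc n choose Suc u"
    "x < (n choose Suc u) + (m choose u) + (2 * u choose (u - 1))"
    using canon_three_terms[OF assms(4)] assms(1,2) by simp_all
  have upper: "kcount s V E \<le> (n choose s) + (m choose (s - 1))"
    if "simple_graph V E" "kcount r V E \<le> y" for V E
    using kcount_le_of_canonical_bounds[OF assms(1,3) bounds] that y assms(2) by simp
  show "kmax s r y = (n choose s) + (m choose (s - 1))"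
  proof (rule kmax_eqI[OF simple_graph_clique_plus_vertex[OF less_imp_le[OF bounds(1)]] _ _ upper])
    show "kcount r {..n} (clique_plus_vertex n m) \<le> y"
      using kcount_clique_plus_vertex[OF bounds(1), of r] assms(2) y by simp
    show "kcount s {..n} (clique_plus_vertex n m) = (n choose s) + (m choose (s - 1))"
      using kcount_clique_plus_vertex[OF bounds(1), of s] assms(3) by simp
  qed
qed

end
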